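(* For the coprime hider strategy $y$, consider two disjoint intervals $[u\oplus\ell]_{n-1}$ and $[v\oplus s]_{n-1}$ (with $u,v,\ell,s$ nonnegative integers) such that $\ell+s\le c$. Then $$y([u\oplus\ell]_{n-1})+y([v\oplus s]_{n-1})\le y([u\oplus(\ell+s+1)]_{n-1}).$$
   Context: Let $k\ge2$, $n>2^k$, $c=2^k-2$ with $\gcd(c,n-1)=1$, and let $h,w$ be the positive integers with $h(n-1)-wc=1$ and $w\in\{1,\dots,n-2\}$ minimal. For integers $u,\ell$ and $r\ge1$, $[u\oplus\ell]_r=\{w\bmod r: u\le w\le u+\ell-1\}$; $[a,b]=\{a,\dots,b\}$; $y(S)=\sum_{i\in S}y_i$. Coprime hider strategy $y\in\mathbb{R}^{\{0,\dots,n-1\}}$: $g(v)=v\frac{h}{wc}$, $r=\lfloor c/h\rfloor$; $y_0=y_{n-1}=0$; starting at $v=1$, repeatedly choose the largest $r^*\in\{r,r+1\}$ with $g(v+r^*-1)\le y([1,v-1])+\frac1w$, set $y_i=\frac{1}{r^*w}$ for $i\in\{v,\dots,v+r^*-1\}$, replace $v$ by $v+r^*$; stop when $v>n-2$. *)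

theory Defs
  imports Main "HOL.Real"
begin

definition cyc_interval :: "nat \<Rightarrow> nat \<Rightarrow> nat \<Rightarrow> nat set" where
  "cyc_interval r u l = (\<lambda>x. x mod r) ` {u..<u + l}"

definition hider_g :: "nat \<Rightarrow> nat \<Rightarrow> nat \<Rightarrow> nat \<Rightarrow> real" where
  "hider_g c h w v = real v * real h / (real w * real c)"

text \<open>One step of the construction: state (v, y) with current block start v and
  the partially defined strategy y (zero where not yet assigned).
  r* is the largest element of {r, r+1} with g(v + r* - 1) <= y([1, v-1]) + 1/w
  (r is taken when r+1 fails).\<close>
definition hider_step :: "nat \<Rightarrow> nat \<Rightarrow> nat \<Rightarrow> nat \<Rightarrow> nat \<times> (nat \<Rightarrow> real) \<Rightarrow> nat \<times> (nat \<Rightarrow> real)" where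
  "hider_step n c h w st =
     (let v = fst st; y = snd st; r = nat \<lfloor>real c / real h\<rfloor> in
      if v > n - 2 then st
      else
        let rs = (if hider_g c h w (v + (r + 1) - 1) \<le> sum y {1..v-1} + 1 / real w
                  then r + 1 else r)
        in (v + rs, \<lambda>i. if v \<le> i \<and> i \<le> v + rs - 1 then 1 / (real rs * real w) else y i))"

text \<open>Iterating n times suffices since each step advances v by
  at least r >= 1 (or the process has stopped).\<close>
definition coprime_hider :: "nat \<Rightarrow> nat \<Rightarrow> nat \<Rightarrow> nat \<Rightarrow> nat \<Rightarrow> real" where
  "coprime_hider n c h w i =
     (if i = 0 \<or> i \<ge> n - 1 then 0
      else snd ((hider_step n c h w ^^ n) (1, \<lambda>_. 0)) i)"

end

theory Submission
  imports Defs
begin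

text \<open>Write \<open>m = n - 1\<close>, so that \<open>h m = w c + 1\<close>. The construction cuts \<open>{1, \<dots>, m - 1}\<close>
  into the \<open>w\<close> blocks \<open>(\<lfloor>k c / h\<rfloor>, \<lfloor>(k + 1) c / h\<rfloor>]\<close> and spreads weight \<open>1 / w\<close> uniformly
  over each block, so \<open>w\<close> times the prefix sums of \<open>y\<close> is the piecewise linear inverse of
  \<open>k \<mapsto> \<lfloor>k c / h\<rfloor>\<close>. As \<open>\<lfloor>i c / h\<rfloor> + \<lfloor>j c / h\<rfloor> \<le> \<lfloor>(i + j) c / h\<rfloor> \<le> \<lfloor>i c / h\<rfloor> + \<lfloor>j c / h\<rfloor> + 1\<close>,
  this inverse \<open>mass\<close> satisfies \<open>mass (a + b) \<le> mass a + mass b \<le> mass (a + b + 1)\<close>. Together with the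
  symmetry \<open>y\<^sub>i = y\<^sub>m\<^sub>-\<^sub>i\<close> (from \<open>h m = w c + 1\<close>) this shows that every cyclic window of
  length \<open>s\<close> has weight at most \<open>mass s / w\<close> and every cyclic window of length \<open>s + 1\<close> weight
  at least \<open>mass s / w\<close>. Splitting \<open>[u \<oplus> (l + s + 1)]\<close> into \<open>[u \<oplus> l]\<close> and \<open>[u + l \<oplus> (s + 1)]\<close>
  gives the claim.\<close>

lemma inj_on_mod_interval:
  fixes m u l :: nat
  assumes "l \<le> m"
  shows "inj_on (\<lambda>x. x mod m) {u..<u + l}"
proof (rule inj_onI)
  fix x y assume x: "x \<in> {u..<u + l}" and y: "y \<in> {u..<u + l}" and eq: "x mod m = y mod m"
  have "m dvd max x y - min x y"
    using eq mod_eq_dvd_iff_nat[of x y m] mod_eq_dvd_iff_nat[of y x m] by (auto simp: max_def min_def)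
  moreover have "max x y - min x y < m"
    using x y assms by auto
  ultimately show "x = y"
    using nat_dvd_not_less[of "max x y - min x y" m] by (cases "x = y") auto
qed

lemma sum_cyc_interval:
  assumes "l \<le> m"
  shows "sum f (cyc_interval m u l) = (\<Sum>x = u..<u + l. f (x mod m))"
  unfolding cyc_interval_def using sum.reindex[OF inj_on_mod_interval[OF assms]] by simp

lemma sum_cyc_interval_split:
  assumes "l1 + l2 \<le> m"
  shows "sum f (cyc_interval m u (l1 + l2))
       = sum f (cyc_interval m u l1) + sum f (cyc_interval m (u + l1) l2)"
  using assms by (simp add: sum_cyc_interval add.assoc sum.atLeastLessThan_concat[symmetric])

lemma cyc_interval_mod: "cyc_interval m (u mod m) l = cyc_interval m u l"
proof -
  define k where "k = u div m * m"
  have "{u..<u + l} = (\<lambda>x. x + k) ` {u mod m..<u mod m + l}"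
    unfolding k_def by simp
  then have "(\<lambda>x. x mod m) ` {u..<u + l} = (\<lambda>x. (x + k) mod m) ` {u mod m..<u mod m + l}"
    by (simp only: image_image)
  also have "\<dots> = (\<lambda>x. x mod m) ` {u mod m..<u mod m + l}"
    unfolding k_def by simp
  finally show ?thesis
    unfolding cyc_interval_def by simp
qed

lemma cyc_interval_inside:
  assumes "u + l \<le> m"
  shows "cyc_interval m u l = {u..<u + l}"
  unfolding cyc_interval_def using assms by (auto intro!: image_cong[where g = id, simplified])

lemma cyc_interval_wrap:
  assumes "u \<le> m" "m \<le> u + l" "l \<le> m"
  shows "cyc_interval m u l = {u..<m} \<union> {..<u + l - m}"
proof -
  have "(\<lambda>x. x mod m) ` {u..<m} = {u..<m}"
    by (auto intro!: image_cong[where g = id, simplified])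
  moreover have "(\<lambda>x. x mod m) ` {m..<u + l} = {..<u + l - m}"
  proof (intro equalityI subsetI)
    fix y assume "y \<in> (\<lambda>x. x mod m) ` {m..<u + l}"
    then obtain x where "m \<le> x" "x < u + l" "y = x mod m" by auto
    then show "y \<in> {..<u + l - m}"
      using assms by (simp add: le_mod_geq)
  next
    fix y assume "y \<in> {..<u + l - m}"
    then have "y = (y + m) mod m" "y + m \<in> {m..<u + l}"
      using assms by auto
    then show "y \<in> (\<lambda>x. x mod m) ` {m..<u + l}" by blast
  qed
  moreover have "{u..<u + l} = {u..<m} \<union> {m..<u + l}"
    using assms by (simp add: ivl_disj_un)
  ultimately show ?thesis
    unfolding cyc_interval_def by (simp only: image_Un)
qed

lemma convex_comb3_unit_interval:
  fixes p q r a b d :: real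
  assumes "0 \<le> p" "0 \<le> q" "0 \<le> r" "p + q + r = 1"
    and "0 \<le> a" "a \<le> 1" "0 \<le> b" "b \<le> 1" "0 \<le> d" "d \<le> 1"
  shows "0 \<le> p * a + q * b + r * d" and "p * a + q * b + r * d \<le> 1"
proof -
  show "0 \<le> p * a + q * b + r * d"
    using assms by simp
  have "p * a + q * b + r * d \<le> p + q + r"
    using assms by (intro add_mono mult_left_le) auto
  then show "p * a + q * b + r * d \<le> 1"
    using assms(4) by simp
qed

locale floor_blocks =
  fixes c h :: nat
  assumes h_pos: "0 < h" and h_le_c: "h \<le> c"
begin

definition block_end :: "nat \<Rightarrow> nat" where
  "block_end k = k * c div h"

definition block_len :: "nat \<Rightarrow> nat" where
  "block_len k = block_end (Suc k) - block_end k"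

definition block_of :: "nat \<Rightarrow> nat" where
  "block_of i = (i * h - 1) div c"

definition density :: "nat \<Rightarrow> real" where
  "density i = (if i = 0 then 0 else 1 / real (block_len (block_of i)))"

definition mass :: "nat \<Rightarrow> real" where
  "mass p = (\<Sum>i\<le>p. density i)"

definition ipol :: "nat \<Rightarrow> real \<Rightarrow> real" where
  "ipol k \<phi> = real (block_end k) + \<phi> * real (block_len k)"

text \<open>Block \<open>k\<close> is \<open>{block_end k + 1 .. block_end (Suc k)}\<close>. In the hider construction
  \<open>density i\<close> is \<open>w y\<^sub>i\<close>, and \<open>ipol k \<phi>\<close> is the point a fraction \<open>\<phi>\<close> of the way through
  block \<open>k\<close>, which \<open>mass\<close> maps back to \<open>k + \<phi>\<close>.\<close>

lemma block_end_0 [simp]: "block_end 0 = 0"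
  by (simp add: block_end_def)

lemma block_end_superadditive: "block_end i + block_end j \<le> block_end (i + j)"
  unfolding block_end_def add_mult_distrib using div_add1_eq[of "i * c" "j * c" h] by linarith

lemma block_end_subadditive: "block_end (i + j) \<le> block_end i + block_end j + 1"
proof -
  have "i * c mod h + j * c mod h < 2 * h"
    using h_pos by (metis add_less_mono mod_less_divisor mult_2)
  then have "(i * c mod h + j * c mod h) div h \<le> 1"
    using less_mult_imp_div_less by fastforce
  then show ?thesis
    unfolding block_end_def add_mult_distrib using div_add1_eq[of "i * c" "j * c" h] by linarith
qed

lemma block_end_1_pos: "0 < block_end 1"
  unfolding block_end_def using h_le_c h_pos by (simp add: div_greater_zero_iff)

lemma block_end_less_Suc: "block_end k < block_end (Suc k)"
  using block_end_superadditive[of k 1] block_end_1_pos by simp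

lemma strict_mono_block_end: "strict_mono block_end"
  unfolding strict_mono_Suc_iff using block_end_less_Suc by blast

lemma block_len_pos: "0 < block_len k"
  unfolding block_len_def using block_end_less_Suc by simp

lemma real_block_len: "real (block_len k) = real (block_end (Suc k)) - real (block_end k)"
  unfolding block_len_def using block_end_less_Suc[of k] by (simp add: of_nat_diff)

lemma block_of_eq:
  assumes "block_end k < i" "i \<le> block_end (Suc k)"
  shows "block_of i = k"
proof -
  have "k * c < i * h"
    using assms(1) h_pos unfolding block_end_def by (simp add: div_less_iff_less_mult)
  moreover have "i * h \<le> Suc k * c"
    using assms(2) h_pos unfolding block_end_def by (simp add: less_eq_div_iff_mult_less_eq)
  ultimately show ?thesis
    unfolding block_of_def by (intro div_nat_eqI) (auto simp: mult.commute)
qed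

lemma density_block:
  "block_end k < i \<Longrightarrow> i \<le> block_end (Suc k) \<Longrightarrow> density i = 1 / real (block_len k)"
  using block_of_eq unfolding density_def by auto

lemma mass_0 [simp]: "mass 0 = 0"
  by (simp add: mass_def density_def)

lemma mass_mono: "p \<le> q \<Longrightarrow> mass p \<le> mass q"
  unfolding mass_def by (rule sum_mono2) (auto simp: density_def)

lemma mass_block_offset:
  "t \<le> block_len k \<Longrightarrow> mass (block_end k + t) = mass (block_end k) + real t / real (block_len k)"
proof (induction t)
  case (Suc t)
  have "density (Suc (block_end k + t)) = 1 / real (block_len k)"
    using Suc.prems by (intro density_block) (auto simp: block_len_def)
  then show ?case
    using Suc by (simp add: mass_def add_divide_distrib)
qed simp

lemma mass_block_end: "mass (block_end k) = real k"
proof (induction k)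
  case (Suc k)
  have "block_end (Suc k) = block_end k + block_len k"
    using block_end_less_Suc[of k] by (simp add: block_len_def)
  then show ?case
    using mass_block_offset[of "block_len k" k] Suc block_len_pos[of k] by simp
qed simp

lemma ex_block_decomp: "\<exists>k t. p = block_end k + t \<and> t < block_len k"
proof (induction p)
  case 0
  show ?case using block_len_pos[of 0] by force
next
  case (Suc p)
  then obtain k t where kt: "p = block_end k + t" "t < block_len k" by blast
  show ?case
  proof (cases "Suc t < block_len k")
    case True
    then show ?thesis using kt by (intro exI[of _ k] exI[of _ "Suc t"]) auto
  next
    case False
    then have "Suc p = block_end (Suc k) + 0"
      using kt by (auto simp: block_len_def)
    then show ?thesis using block_len_pos by blast
  qed
qed

lemma ex_ipol_decomp: "\<exists>k \<phi>. 0 \<le> \<phi> \<and> \<phi> < 1 \<and> real p = ipol k \<phi> \<and> mass p = real k + \<phi>"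
proof -
  obtain k t where kt: "p = block_end k + t" "t < block_len k"
    using ex_block_decomp by blast
  have "mass p = real k + real t / real (block_len k)"
    using kt mass_block_offset[of t k] by (simp add: mass_block_end)
  moreover have "real p = ipol k (real t / real (block_len k))"
    using kt block_len_pos[of k] by (simp add: ipol_def)
  ultimately show ?thesis
    using kt by (intro exI[of _ k] exI[of _ "real t / real (block_len k)"]) auto
qed

lemma mass_le_if_le_ipol:
  assumes "0 \<le> \<phi>" "\<phi> \<le> 1" "real p \<le> ipol k \<phi>"
  shows "mass p \<le> real k + \<phi>"
proof (cases "p \<le> block_end k")
  case True
  then show ?thesis
    using mass_mono[OF True] mass_block_end[of k] assms by simp
next
  case False
  define t where "t = p - block_end k"
  have p: "p = block_end k + t" using False t_def by simp
  have L: "0 < real (block_len k)" using block_len_pos[of k] by simp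
  have "real t \<le> \<phi> * real (block_len k)"
    using assms(3) p by (simp add: ipol_def)
  moreover have "\<phi> * real (block_len k) \<le> real (block_len k)"
    using assms(2) L by simp
  ultimately have "t \<le> block_len k" and "real t / real (block_len k) \<le> \<phi>"
    using L of_nat_le_iff by (fastforce, simp add: divide_le_eq)
  then show ?thesis
    using mass_block_offset p by (simp add: mass_block_end)
qed

lemma mass_ge_if_ipol_le:
  assumes "0 \<le> \<phi>" "\<phi> \<le> 1" "ipol k \<phi> \<le> real p"
  shows "real k + \<phi> \<le> mass p"
proof (cases "block_end (Suc k) \<le> p")
  case True
  then show ?thesis
    using mass_mono[OF True] mass_block_end[of "Suc k"] assms by simp
next
  case False
  have L: "0 < real (block_len k)" using block_len_pos[of k] by simp
  moreover have "0 \<le> \<phi> * real (block_len k)"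
    using assms(1) by simp
  ultimately have "real (block_end k) \<le> real p"
    using assms(3) unfolding ipol_def by linarith
  then have "block_end k \<le> p" by simp
  define t where "t = p - block_end k"
  have p: "p = block_end k + t" using \<open>block_end k \<le> p\<close> t_def by simp
  have "t \<le> block_len k"
    using False p by (simp add: block_len_def)
  moreover have "\<phi> \<le> real t / real (block_len k)"
    using assms(3) p L by (simp add: ipol_def le_divide_eq)
  ultimately show ?thesis
    using mass_block_offset p by (simp add: mass_block_end)
qed

lemma block_end_defect:
  "0 \<le> real (block_end (i + j)) - real (block_end i) - real (block_end j)"
  "real (block_end (i + j)) - real (block_end i) - real (block_end j) \<le> 1"
  using block_end_superadditive[of i j] block_end_subadditive[of i j] by linarith+

text \<open>On each of the two triangles into which the diagonal \<open>x + y = 1\<close> cuts the unit square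
  both sides are affine, so the defect of additivity of \<^const>\<open>ipol\<close> is a convex combination
  of the defects of \<^const>\<open>block_end\<close> at the three vertices.\<close>

lemma ipol_almost_additive:
  assumes "0 \<le> x" "x \<le> 1" "0 \<le> y" "y \<le> 1"
  shows "\<exists>k \<phi>. 0 \<le> \<phi> \<and> \<phi> \<le> 1 \<and> real k + \<phi> = real i + x + (real j + y)
           \<and> ipol i x + ipol j y \<le> ipol k \<phi> \<and> ipol k \<phi> \<le> ipol i x + ipol j y + 1"
proof -
  define D where "D a b = real (block_end (a + b)) - real (block_end a) - real (block_end b)" for a b
  have D: "0 \<le> D a b" "D a b \<le> 1" for a b
    unfolding D_def using block_end_defect by auto
  have ipol: "ipol k \<phi> = (1 - \<phi>) * real (block_end k) + \<phi> * real (block_end (Suc k))" for k \<phi>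
    unfolding ipol_def real_block_len by algebra
  show ?thesis
  proof (cases "x + y \<le> 1")
    case True
    have "ipol (i + j) (x + y) - (ipol i x + ipol j y)
        = (1 - x - y) * D i j + x * D (Suc i) j + y * D i (Suc j)"
      unfolding ipol D_def by (simp add: algebra_simps)
    moreover have "0 \<le> (1 - x - y) * D i j + x * D (Suc i) j + y * D i (Suc j)"
        "(1 - x - y) * D i j + x * D (Suc i) j + y * D i (Suc j) \<le> 1"
      by (rule convex_comb3_unit_interval; use assms True D in simp)+
    ultimately have "ipol i x + ipol j y \<le> ipol (i + j) (x + y)"
        "ipol (i + j) (x + y) \<le> ipol i x + ipol j y + 1"
      by linarith+
    then show ?thesis
      using assms True by (intro exI[of _ "i + j"] exI[of _ "x + y"]) auto
  next
    case False
    have "ipol (Suc (i + j)) (x + y - 1) - (ipol i x + ipol j y)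
        = (1 - y) * D (Suc i) j + (1 - x) * D i (Suc j) + (x + y - 1) * D (Suc i) (Suc j)"
      unfolding ipol D_def by (simp add: algebra_simps)
    moreover have "0 \<le> (1 - y) * D (Suc i) j + (1 - x) * D i (Suc j) + (x + y - 1) * D (Suc i) (Suc j)"
        "(1 - y) * D (Suc i) j + (1 - x) * D i (Suc j) + (x + y - 1) * D (Suc i) (Suc j) \<le> 1"
      by (rule convex_comb3_unit_interval; use assms False D in simp)+
    ultimately have "ipol i x + ipol j y \<le> ipol (Suc (i + j)) (x + y - 1)"
        "ipol (Suc (i + j)) (x + y - 1) \<le> ipol i x + ipol j y + 1"
      by linarith+
    then show ?thesis
      using assms False by (intro exI[of _ "Suc (i + j)"] exI[of _ "x + y - 1"]) auto
  qed
qed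

lemma mass_almost_additive:
  shows "mass (a + b) \<le> mass a + mass b" and "mass a + mass b \<le> mass (a + b + 1)"
proof -
  obtain i x where x: "0 \<le> x" "x < 1" "real a = ipol i x" "mass a = real i + x"
    using ex_ipol_decomp by blast
  obtain j y where y: "0 \<le> y" "y < 1" "real b = ipol j y" "mass b = real j + y"
    using ex_ipol_decomp by blast
  obtain k \<phi> where k: "0 \<le> \<phi>" "\<phi> \<le> 1" "real k + \<phi> = mass a + mass b"
      "real (a + b) \<le> ipol k \<phi>" "ipol k \<phi> \<le> real (a + b + 1)"
    using ipol_almost_additive[of x y i j] x y by auto
  show "mass (a + b) \<le> mass a + mass b"
    using mass_le_if_le_ipol[OF k(1,2,4)] k(3) by simp
  show "mass a + mass b \<le> mass (a + b + 1)"
    using mass_ge_if_ipol_le[OF k(1,2,5)] k(3) by simp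
qed

end

locale hider_setting =
  fixes c h m w :: nat
  assumes bezout: "h * m = w * c + 1" and w_pos: "0 < w" and w_less_m: "w < m"
begin

lemma h_pos: "0 < h"
  using bezout by (cases h) auto

lemma h_le_c: "h \<le> c"
proof (rule ccontr)
  assume "\<not> h \<le> c"
  then have "(c + 1) * m \<le> h * m" by (intro mult_le_mono1) simp
  moreover have "w * c \<le> (m - 1) * c"
    using w_less_m by (intro mult_le_mono1) simp
  moreover have "(c + 1) * m = c * m + m" "(m - 1) * c + c = c * m"
    using w_less_m by (simp add: distrib_right, cases m, auto)
  ultimately show False
    using bezout w_pos w_less_m by linarith
qed

sublocale floor_blocks c h
  using h_pos h_le_c by unfold_locales

lemma c_pos: "0 < c"
  using h_pos h_le_c by simp

lemma w_mult_c: "w * c = h * (m - 1) + (h - 1)"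
  using bezout h_pos w_less_m by (cases m) (auto simp: algebra_simps)

lemma block_end_w: "block_end w = m - 1"
  unfolding block_end_def by (rule div_nat_eqI) (use w_mult_c h_pos in auto)

lemma block_end_reflect:
  assumes "k \<le> w"
  shows "block_end (w - k) = m - 1 - block_end k"
proof -
  define E where "E = block_end k"
  define \<rho> where "\<rho> = k * c mod h"
  have kc: "h * E + \<rho> = k * c" unfolding E_def \<rho>_def block_end_def by simp
  have \<rho>: "\<rho> < h" unfolding \<rho>_def using h_pos by simp
  have E: "E \<le> m - 1"
    unfolding E_def block_end_w[symmetric] using assms strict_mono_less_eq[OF strict_mono_block_end] by simp
  have "(w - k) * c + k * c = w * c"
    using assms by (simp add: diff_mult_distrib)
  moreover have "h * (m - 1 - E) + h * E = h * (m - 1)"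
    using E by (metis add_mult_distrib2 le_add_diff_inverse2)
  ultimately have "(w - k) * c = h * (m - 1 - E) + (h - 1 - \<rho>)"
    using kc w_mult_c \<rho> by linarith
  then have "block_end (w - k) = m - 1 - E"
    unfolding block_end_def by (intro div_nat_eqI) (use \<rho> h_pos in auto)
  then show ?thesis
    by (simp add: E_def)
qed

lemma density_reflect:
  assumes "1 \<le> i" "i \<le> m - 1"
  shows "density (m - i) = density i"
proof -
  obtain k t where kt: "i - 1 = block_end k + t" "t < block_len k"
    using ex_block_decomp by blast
  have blk: "block_end k < i" "i \<le> block_end (Suc k)"
    using kt assms by (auto simp: block_len_def)
  have "k < w"
    using blk assms block_end_w strict_mono_less_eq[OF strict_mono_block_end, of w k] by auto
  then have "block_end (w - Suc k) = m - 1 - block_end (Suc k)"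
      and "block_end (Suc (w - Suc k)) = m - 1 - block_end k"
      and "block_end (Suc k) \<le> m - 1"
    using block_end_reflect[of "Suc k"] block_end_reflect[of k] block_end_w
      strict_mono_less_eq[OF strict_mono_block_end, of "Suc k" w] by (simp_all add: Suc_diff_Suc)
  moreover have "block_end k < block_end (Suc k)"
    by (rule block_end_less_Suc)
  ultimately have "block_end (w - Suc k) < m - i" "m - i \<le> block_end (Suc (w - Suc k))"
      and "block_len (w - Suc k) = block_len k"
    using blk assms by (auto simp: block_len_def)
  then show ?thesis
    using density_block[OF blk] density_block[of "w - Suc k" "m - i"] by simp
qed

lemma mass_reflect: "p \<le> m - 1 \<Longrightarrow> mass (m - 1) - mass (m - 1 - p) = mass p"
proof (induction p)
  case (Suc p)
  then have "m - 1 - p = Suc (m - 1 - Suc p)" "m - Suc p = Suc (m - 1 - Suc p)"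
    by auto
  then show ?case
    using Suc density_reflect[of "Suc p"] by (simp add: mass_def)
qed simp

lemma hider_g_le_iff: "hider_g c h w x \<le> real k / real w \<longleftrightarrow> x \<le> block_end k"
proof -
  have "hider_g c h w x \<le> real k / real w \<longleftrightarrow> real x * real h / real c \<le> real k"
    unfolding hider_g_def using w_pos by (simp add: field_simps)
  also have "\<dots> \<longleftrightarrow> x * h \<le> k * c"
    using c_pos by (simp add: divide_le_eq flip: of_nat_mult)
  also have "\<dots> \<longleftrightarrow> x \<le> block_end k"
    unfolding block_end_def using h_pos by (simp add: less_eq_div_iff_mult_less_eq)
  finally show ?thesis .
qed

definition partial_strategy :: "nat \<Rightarrow> nat \<Rightarrow> real" where
  "partial_strategy j i = (if 1 \<le> i \<and> i \<le> block_end j then density i / real w else 0)"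

lemma sum_partial_strategy: "sum (partial_strategy j) {1..block_end j} = real j / real w"
proof -
  have "sum (partial_strategy j) {1..block_end j} = (\<Sum>i=1..block_end j. density i) / real w"
    unfolding partial_strategy_def sum_divide_distrib by (rule sum.cong) auto
  also have "(\<Sum>i=1..block_end j. density i) = mass (block_end j)"
    unfolding mass_def by (rule sum.mono_neutral_left) (auto simp: density_def)
  finally show ?thesis
    by (simp add: mass_block_end)
qed

lemma partial_strategy_Suc:
  "partial_strategy (Suc j) = (\<lambda>i. if block_end j + 1 \<le> i \<and> i \<le> block_end (Suc j)
      then 1 / (real (block_len j) * real w) else partial_strategy j i)"
proof
  fix i
  show "partial_strategy (Suc j) i = (if block_end j + 1 \<le> i \<and> i \<le> block_end (Suc j)
      then 1 / (real (block_len j) * real w) else partial_strategy j i)"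
    using density_block[of j i] block_end_less_Suc[of j] by (auto simp: partial_strategy_def)
qed

text \<open>The step of the construction starting at \<open>block_end j + 1\<close> fills exactly block \<open>j\<close>:
  the test on \<open>r + 1\<close> succeeds iff \<open>block_len j = r + 1\<close>, where \<open>r = block_end 1\<close>.\<close>

lemma hider_step_block:
  assumes "j < w"
  shows "hider_step (Suc m) c h w (block_end j + 1, partial_strategy j)
       = (block_end (Suc j) + 1, partial_strategy (Suc j))"
proof -
  have r: "nat \<lfloor>real c / real h\<rfloor> = block_end 1"
    by (simp add: floor_divide_of_nat_eq block_end_def)
  have not_stopped: "\<not> block_end j + 1 > Suc m - 2"
    using strict_mono_less[OF strict_mono_block_end, of j w] assms block_end_w by simp
  have sum: "sum (partial_strategy j) {1..block_end j + 1 - 1} + 1 / real w = real (Suc j) / real w"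
    using sum_partial_strategy[of j] by (simp add: add_divide_distrib)
  have "block_end j + block_end 1 \<le> block_end (Suc j)" "block_end (Suc j) \<le> block_end j + block_end 1 + 1"
    using block_end_superadditive[of j 1] block_end_subadditive[of j 1] by simp_all
  then have len: "(if hider_g c h w (block_end j + 1 + (block_end 1 + 1) - 1)
        \<le> sum (partial_strategy j) {1..block_end j + 1 - 1} + 1 / real w
      then block_end 1 + 1 else block_end 1) = block_len j"
    unfolding sum hider_g_le_iff by (auto simp: block_len_def)
  have "block_end j + 1 + block_len j = block_end (Suc j) + 1"
    using block_end_less_Suc[of j] by (simp add: block_len_def)
  then show ?thesis
    unfolding hider_step_def Let_def fst_conv snd_conv r len partial_strategy_Suc
    using not_stopped by simp
qed

lemma hider_step_iterate:
  "j \<le> w \<Longrightarrow> (hider_step (Suc m) c h w ^^ j) (1, \<lambda>_. 0) = (block_end j + 1, partial_strategy j)"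
proof (induction j)
  case 0
  show ?case by (auto simp: partial_strategy_def)
next
  case (Suc j)
  then show ?case
    using hider_step_block[of j] by simp
qed

lemma coprime_hider_eq: "i < m \<Longrightarrow> coprime_hider (Suc m) c h w i = density i / real w"
proof -
  assume "i < m"
  have stop: "hider_step (Suc m) c h w (m, partial_strategy w) = (m, partial_strategy w)"
    unfolding hider_step_def Let_def using w_less_m by simp
  have "(hider_step (Suc m) c h w ^^ (q + w)) (1, \<lambda>_. 0) = (m, partial_strategy w)" for q
    by (induction q) (use hider_step_iterate[of w] block_end_w w_less_m stop in auto)
  from this[of "Suc m - w"] have "(hider_step (Suc m) c h w ^^ Suc m) (1, \<lambda>_. 0) = (m, partial_strategy w)"
    using w_less_m by simp
  then show ?thesis
    using \<open>i < m\<close> block_end_w by (auto simp: coprime_hider_def partial_strategy_def density_def)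
qed

abbreviation strategy :: "nat \<Rightarrow> real" where
  "strategy \<equiv> coprime_hider (Suc m) c h w"

lemma prefix_sum_strategy: "p \<le> m \<Longrightarrow> real w * sum strategy {..<p} = mass (p - 1)"
proof (cases p)
  case (Suc q)
  assume "p \<le> m"
  then have "sum strategy {..<p} = (\<Sum>i\<le>q. density i / real w)"
    unfolding Suc lessThan_Suc_atMost by (intro sum.cong) (auto simp: coprime_hider_eq)
  also have "\<dots> = mass q / real w"
    by (simp add: mass_def sum_divide_distrib)
  finally show ?thesis
    using Suc w_pos by simp
qed simp

lemma window_inside:
  assumes "u + t \<le> m"
  shows "real w * sum strategy (cyc_interval m u t) = mass (u + t - 1) - mass (u - 1)"
proof -
  have "sum strategy {u..<u + t} = sum strategy {..<u + t} - sum strategy {..<u}"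
    using sum_diff_nat_ivl[of 0 u "u + t" strategy] by (simp add: lessThan_atLeast0)
  then show ?thesis
    using assms prefix_sum_strategy[of "u + t"] prefix_sum_strategy[of u]
    by (simp add: cyc_interval_inside right_diff_distrib)
qed

lemma window_wrap:
  assumes "u < m" "m < u + t" "t \<le> m"
  shows "real w * sum strategy (cyc_interval m u t) = mass (m - u) + mass (u + t - m - 1)"
proof -
  have "sum strategy (cyc_interval m u t) = sum strategy {u..<m} + sum strategy {..<u + t - m}"
    using assms by (simp add: cyc_interval_wrap, subst sum.union_disjoint) auto
  also have "sum strategy {u..<m} = sum strategy {..<m} - sum strategy {..<u}"
    using sum_diff_nat_ivl[of 0 u m strategy] assms by (simp add: lessThan_atLeast0)
  finally have "real w * sum strategy (cyc_interval m u t)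
      = real w * sum strategy {..<m} - real w * sum strategy {..<u} + real w * sum strategy {..<u + t - m}"
    by (simp only: distrib_left right_diff_distrib)
  also have "\<dots> = mass (m - 1) - mass (u - 1) + mass (u + t - m - 1)"
    using assms prefix_sum_strategy[of m] prefix_sum_strategy[of u] prefix_sum_strategy[of "u + t - m"]
    by simp
  also have "mass (m - 1) - mass (u - 1) = mass (m - u)"
    using mass_reflect[of "m - u"] assms by (simp add: diff_diff_right)
  finally show ?thesis by simp
qed

lemma window_le_mass:
  assumes "t \<le> m"
  shows "real w * sum strategy (cyc_interval m u t) \<le> mass t"
proof -
  define u' where "u' = u mod m"
  have u': "u' < m" using w_less_m unfolding u'_def by simp
  have cyc: "cyc_interval m u = cyc_interval m u'"
    unfolding u'_def by (intro ext cyc_interval_mod[symmetric])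
  show ?thesis
  proof (cases "u' + t \<le> m")
    case True
    have "mass (u' + t - 1) \<le> mass (u' - 1 + t)"
      by (rule mass_mono) simp
    also have "\<dots> \<le> mass (u' - 1) + mass t"
      by (rule mass_almost_additive(1))
    finally show ?thesis
      using window_inside[OF True] by (simp add: cyc)
  next
    case False
    have "mass (m - u') + mass (u' + t - m - 1) \<le> mass (m - u' + (u' + t - m - 1) + 1)"
      by (rule mass_almost_additive(2))
    also have "m - u' + (u' + t - m - 1) + 1 = t"
      using False u' by simp
    finally show ?thesis
      using window_wrap[of u' t] False u' assms by (simp add: cyc)
  qed
qed

lemma mass_le_window:
  assumes "t < m"
  shows "mass t \<le> real w * sum strategy (cyc_interval m u (t + 1))"
proof -
  define u' where "u' = u mod m"
  have u': "u' < m" using w_less_m unfolding u'_def by simp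
  have cyc: "cyc_interval m u = cyc_interval m u'"
    unfolding u'_def by (intro ext cyc_interval_mod[symmetric])
  show ?thesis
  proof (cases "u' + (t + 1) \<le> m")
    case True
    have "mass t \<le> mass (u' + t) - mass (u' - 1)"
    proof (cases "u' = 0")
      case False
      then show ?thesis
        using mass_almost_additive(2)[of "u' - 1" t] by simp
    qed simp
    then show ?thesis
      using window_inside[OF True] by (simp add: cyc)
  next
    case False
    have "mass (m - u' + (u' + t - m)) \<le> mass (m - u') + mass (u' + t - m)"
      by (rule mass_almost_additive(1))
    also have "m - u' + (u' + t - m) = t"
      using False u' by simp
    finally show ?thesis
      using window_wrap[of u' "t + 1"] False u' assms by (simp add: cyc)
  qed
qed

end

text \<open>Only \<open>h (n - 1) = w c + 1\<close> and \<open>l + s < n - 1\<close> are used: a window of length \<open>s + 1\<close>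
  always weighs at least as much as any window of length \<open>s\<close>, so the two intervals need not
  be disjoint.\<close>

theorem lemma3p9:
  fixes k n c h w u v l s :: nat
  assumes "k \<ge> 2" and "n > 2 ^ k" and "c = 2 ^ k - 2" and "coprime c (n - 1)"
    and "h > 0" and "w \<ge> 1" and "w \<le> n - 2"
    and "int h * (int n - 1) - int w * int c = 1"
    and "\<forall>h' w'. h' > 0 \<and> w' \<ge> 1 \<and> w' \<le> n - 2 \<and> int h' * (int n - 1) - int w' * int c = 1
            \<longrightarrow> w \<le> w'"
    and "cyc_interval (n - 1) u l \<inter> cyc_interval (n - 1) v s = {}"
    and "l + s \<le> c"
  shows "sum (coprime_hider n c h w) (cyc_interval (n - 1) u l)
       + sum (coprime_hider n c h w) (cyc_interval (n - 1) v s)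
       \<le> sum (coprime_hider n c h w) (cyc_interval (n - 1) u (l + s + 1))"
proof -
  define m where "m = n - 1"
  have n: "n = Suc m" using assms(2) unfolding m_def by simp
  have "int (h * m) = int (w * c + 1)"
    using assms(8) n by (simp add: algebra_simps)
  then have "h * m = w * c + 1"
    by (simp only: of_nat_eq_iff)
  then interpret hider_setting c h m w
    using assms(6,7) n by unfold_locales simp_all
  have "c < 2 ^ k" using assms(3) by simp
  then have lsm: "l + s + 1 \<le> m" using assms(2,11) n by simp
  have "real w * sum strategy (cyc_interval m v s) \<le> real w * sum strategy (cyc_interval m (u + l) (s + 1))"
    using window_le_mass[of s v] mass_le_window[of s "u + l"] lsm by simp
  then have "sum strategy (cyc_interval m v s) \<le> sum strategy (cyc_interval m (u + l) (s + 1))"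
    using w_pos by simp
  moreover have "sum strategy (cyc_interval m u (l + s + 1))
      = sum strategy (cyc_interval m u l) + sum strategy (cyc_interval m (u + l) (s + 1))"
    using sum_cyc_interval_split[of l "s + 1" m] lsm by (simp add: add.assoc)
  ultimately show ?thesis
    by (simp add: n)
qed

end
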